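(* Let $d\ge 1$, $\sigma=1$, and $\varpi\in(0,1)$ (either $\varpi\ne\frac12$ or $\varpi=\frac12$). Then the population EM operator satisfies $$\|M(\theta)\|_2\le\sqrt{2/\pi}\qquad\text{for every }\theta\in\mathbb{R}^d,$$ where $\pi=3.14159\ldots$ is the circle constant.
   Context: $X\sim\mathcal N(0,I_d)$. For $\theta,x\in\mathbb{R}^d$, $w_\theta(x)=\dfrac{\varpi e^{-\|\theta-x\|_2^2/2}}{\varpi e^{-\|\theta-x\|_2^2/2}+(1-\varpi)e^{-\|\theta+x\|_2^2/2}}$, and $M(\theta)=\mathbb{E}[(2w_\theta(X)-1)X]$. *)

theory Defs
  imports "HOL-Probability.Probability"
begin

definition std_gauss :: "(real ^ 'd::finite) measure" where
  "std_gauss = density lborel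
     (\<lambda>x. ennreal ((2 * pi) powr (- real CARD('d) / 2) * exp (- (norm x)\<^sup>2 / 2)))"

definition em_weight :: "real \<Rightarrow> real ^ 'd::finite \<Rightarrow> real ^ 'd \<Rightarrow> real" where
  "em_weight p \<theta> x =
     p * exp (- (norm (\<theta> - x))\<^sup>2 / 2) /
     (p * exp (- (norm (\<theta> - x))\<^sup>2 / 2) + (1 - p) * exp (- (norm (\<theta> + x))\<^sup>2 / 2))"

definition em_M :: "real \<Rightarrow> real ^ 'd::finite \<Rightarrow> real ^ 'd" where
  "em_M p \<theta> = (\<integral>x. (2 * em_weight p \<theta> x - 1) *\<^sub>R x \<partial>std_gauss)"

end

theory Submission
  imports Defs
begin

text \<open>
  Testing the vector \<open>M(\<theta>)\<close> against its own direction gives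
  \<open>\<parallel>M(\<theta>)\<parallel>\<^sup>2 = E[(2w\<^sub>\<theta>(X) - 1) \<langle>M(\<theta>), X\<rangle>] \<le> E|\<langle>M(\<theta>), X\<rangle>|\<close>, since \<open>0 \<le> w\<^sub>\<theta> \<le> 1\<close>.
  The projection \<open>\<langle>v, X\<rangle>\<close> of a standard Gaussian vector is \<open>N(0, \<parallel>v\<parallel>\<^sup>2)\<close>, so
  \<open>E|\<langle>v, X\<rangle>| = \<parallel>v\<parallel> \<surd>(2/\<pi>)\<close>, and dividing by \<open>\<parallel>M(\<theta>)\<parallel>\<close> gives the bound.
\<close>

lemma (in product_prob_space) indep_vars_components:
  assumes "I \<noteq> {}"
  shows "indep_vars M (\<lambda>i \<omega>. \<omega> i) I"
proof (subst indep_vars_iff_distr_eq_PiM'[OF assms])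
  show "random_variable (M i) (\<lambda>\<omega>. \<omega> i)" if "i \<in> I" for i
    using that by measurable
  have "distr (PiM I M) (PiM I M) (\<lambda>\<omega>. \<lambda>i\<in>I. \<omega> i) = distr (PiM I M) (PiM I M) (\<lambda>\<omega>. \<omega>)"
    by (rule distr_cong) (auto simp: space_PiM PiE_def extensional_restrict)
  also have "\<dots> = PiM I (\<lambda>i. distr (PiM I M) (M i) (\<lambda>\<omega>. \<omega> i))"
    by (simp add: PiM_component cong: PiM_cong)
  finally show "distr (PiM I M) (PiM I M) (\<lambda>\<omega>. \<lambda>i\<in>I. \<omega> i)
      = PiM I (\<lambda>i. distr (PiM I M) (M i) (\<lambda>\<omega>. \<omega> i))" .
qed

lemma PiM_density_eq_density_PiM:
  fixes f :: "'a \<Rightarrow> real"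
  assumes I: "finite I" and N: "sigma_finite_measure N" and prob: "prob_space (density N f)"
    and f: "f \<in> borel_measurable N" "\<And>x. 0 \<le> f x"
  shows "PiM I (\<lambda>_. density N f) = density (PiM I (\<lambda>_. N)) (\<lambda>\<omega>. \<Prod>i\<in>I. f (\<omega> i))"
proof -
  interpret P: product_prob_space "\<lambda>_. density N f" I
    using prob by (simp add: product_prob_space_def product_prob_space_axioms_def
        product_sigma_finite_def prob_space_imp_sigma_finite)
  interpret L: product_sigma_finite "\<lambda>_. N"
    using N by (simp add: product_sigma_finite_def)
  show ?thesis
  proof (rule P.PiM_eqI[OF I, symmetric])
    show "sets (density (PiM I (\<lambda>_. N)) (\<lambda>\<omega>. \<Prod>i\<in>I. f (\<omega> i)))
        = sets (PiM I (\<lambda>_. density N f))"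
      by (simp cong: sets_PiM_cong)
  next
    fix A assume A: "\<And>i. i \<in> I \<Longrightarrow> A i \<in> sets (density N f)"
    have "indicator (Pi\<^sub>E I A) \<omega> = (\<Prod>i\<in>I. indicator (A i) (\<omega> i) :: ennreal)"
      if "\<omega> \<in> space (PiM I (\<lambda>_. N))" for \<omega>
      using that I by (auto simp: indicator_def space_PiM PiE_def extensional_def prod_zero_iff
          intro!: prod.neutral)
    then have "emeasure (density (PiM I (\<lambda>_. N)) (\<lambda>\<omega>. \<Prod>i\<in>I. f (\<omega> i))) (Pi\<^sub>E I A)
        = (\<integral>\<^sup>+ \<omega>. (\<Prod>i\<in>I. ennreal (f (\<omega> i)) * indicator (A i) (\<omega> i)) \<partial>PiM I (\<lambda>_. N))"
      using A f I by (subst emeasure_density)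
        (auto intro!: sets_PiM_I_finite nn_integral_cong simp: prod_ennreal prod.distrib)
    also have "\<dots> = (\<Prod>i\<in>I. \<integral>\<^sup>+ x. ennreal (f x) * indicator (A i) x \<partial>N)"
      using A f by (subst L.product_nn_integral_prod[OF I]) auto
    also have "\<dots> = (\<Prod>i\<in>I. emeasure (density N f) (A i))"
      using A f by (intro prod.cong refl) (simp add: emeasure_density)
    finally show "emeasure (density (PiM I (\<lambda>_. N)) (\<lambda>\<omega>. \<Prod>i\<in>I. f (\<omega> i))) (Pi\<^sub>E I A)
        = (\<Prod>i\<in>I. emeasure (density N f) (A i))" .
  qed
qed

lemma std_normal_linear_combination_distributed:
  fixes c :: "'i \<Rightarrow> real"
  assumes I: "finite I" and c: "\<exists>i\<in>I. c i \<noteq> 0"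
  shows "distributed (PiM I (\<lambda>_. std_normal_distribution)) lborel
           (\<lambda>\<omega>. \<Sum>i\<in>I. c i * \<omega> i) (normal_density 0 (sqrt (\<Sum>i\<in>I. (c i)\<^sup>2)))"
proof -
  interpret P: product_prob_space "\<lambda>_. std_normal_distribution" I
    by (simp add: product_prob_space_def product_prob_space_axioms_def product_sigma_finite_def
        prob_space_normal_density prob_space_imp_sigma_finite)
  \<comment> \<open>\<open>sum_indep_normal\<close> needs positive variances, so drop the zero coefficients.\<close>
  define J where "J = {i\<in>I. c i \<noteq> 0}"
  have J: "finite J" "J \<noteq> {}" "J \<subseteq> I"
    using I c by (auto simp: J_def)
  have "P.indep_vars (\<lambda>_. borel) (\<lambda>i \<omega>. c i * \<omega> i) I"
    using J P.indep_vars_compose2[OF P.indep_vars_components, of "\<lambda>i x. c i * x" "\<lambda>_. borel"]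
    by auto
  then have indep: "P.indep_vars (\<lambda>_. borel) (\<lambda>i \<omega>. c i * \<omega> i) J"
    by (rule P.indep_vars_subset) (rule J)
  have "distributed (PiM I (\<lambda>_. std_normal_distribution)) lborel (\<lambda>\<omega>. c i * \<omega> i)
          (normal_density 0 \<bar>c i\<bar>)" if "i \<in> J" for i
  proof -
    have "i \<in> I" "c i \<noteq> 0" using that by (auto simp: J_def)
    have "distr (PiM I (\<lambda>_. std_normal_distribution)) lborel (\<lambda>\<omega>. \<omega> i)
        = std_normal_distribution"
      using P.PiM_component[OF \<open>i \<in> I\<close>] by (simp cong: distr_cong)
    then have "distributed (PiM I (\<lambda>_. std_normal_distribution)) lborel (\<lambda>\<omega>. \<omega> i)
        (normal_density 0 1)"
      using \<open>i \<in> I\<close> by (auto simp: distributed_def measurable_component_singleton)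
    from P.normal_density_affine[OF this, of "c i" 0] \<open>c i \<noteq> 0\<close> show ?thesis
      by simp
  qed
  from P.sum_indep_normal[OF J(1,2) indep _ this]
  have "distributed (PiM I (\<lambda>_. std_normal_distribution)) lborel
      (\<lambda>\<omega>. \<Sum>i\<in>J. c i * \<omega> i) (normal_density 0 (sqrt (\<Sum>i\<in>J. (c i)\<^sup>2)))"
    by (simp add: J_def)
  moreover have "(\<Sum>i\<in>J. c i * \<omega> i) = (\<Sum>i\<in>I. c i * \<omega> i)" for \<omega>
    using I by (intro sum.mono_neutral_left) (auto simp: J_def)
  moreover have "(\<Sum>i\<in>J. (c i)\<^sup>2) = (\<Sum>i\<in>I. (c i)\<^sup>2)"
    using I by (intro sum.mono_neutral_left) (auto simp: J_def)
  ultimately show ?thesis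
    by simp
qed

lemma norm_sum_Basis_scaleR_squared:
  fixes f :: "'a::euclidean_space \<Rightarrow> real"
  shows "(norm (\<Sum>b\<in>Basis. f b *\<^sub>R b))\<^sup>2 = (\<Sum>b\<in>Basis. (f b)\<^sup>2)"
proof -
  let ?x = "\<Sum>c\<in>Basis. f c *\<^sub>R c"
  have coord: "?x \<bullet> b = f b" if "b \<in> Basis" for b
    using that by (simp add: inner_sum_left inner_Basis if_distrib sum.delta cong: if_cong)
  have "(norm ?x)\<^sup>2 = (\<Sum>b\<in>Basis. (?x \<bullet> b) * (?x \<bullet> b))"
    by (simp only: power2_norm_eq_inner euclidean_inner[of ?x ?x])
  also have "\<dots> = (\<Sum>b\<in>Basis. (f b)\<^sup>2)"
    by (intro sum.cong refl) (simp add: coord power2_eq_square)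
  finally show ?thesis .
qed

lemma std_gauss_density_eq_prod_std_normal_density:
  fixes f :: "real^'d::finite \<Rightarrow> real"
  shows "(2 * pi) powr (- real CARD('d) / 2) * exp (- (norm (\<Sum>b\<in>Basis. f b *\<^sub>R b))\<^sup>2 / 2)
     = (\<Prod>b\<in>Basis. std_normal_density (f b))"
proof -
  have "(2 * pi) powr (- real CARD('d) / 2) = ((2 * pi) powr (1/2)) powr (- real CARD('d))"
    by (simp add: powr_powr)
  also have "\<dots> = (1 / sqrt (2 * pi)) ^ card (Basis :: (real^'d) set)"
    by (simp add: powr_half_sqrt powr_minus powr_realpow power_one_over inverse_eq_divide)
  finally have "(2 * pi) powr (- real CARD('d) / 2) * exp (- (norm (\<Sum>b\<in>Basis. f b *\<^sub>R b))\<^sup>2 / 2)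
      = (\<Prod>b\<in>(Basis :: (real^'d) set). 1 / sqrt (2 * pi)) * exp (\<Sum>b\<in>Basis. - (f b)\<^sup>2 / 2)"
    by (simp add: norm_sum_Basis_scaleR_squared sum_divide_distrib sum_negf)
  also have "\<dots> = (\<Prod>b\<in>Basis. std_normal_density (f b))"
    by (simp add: exp_sum prod_dividef std_normal_density_def power_one_over)
  finally show ?thesis .
qed

lemma std_gauss_eq_distr_PiM:
  "(std_gauss :: (real^'d::finite) measure)
     = distr (PiM Basis (\<lambda>_. std_normal_distribution)) borel (\<lambda>\<omega>. \<Sum>b\<in>Basis. \<omega> b *\<^sub>R b)"
proof -
  let ?S = "\<lambda>\<omega>. \<Sum>b\<in>(Basis :: (real^'d) set). \<omega> b *\<^sub>R b"
  let ?g = "\<lambda>x::real^'d. ennreal ((2 * pi) powr (- real CARD('d) / 2) * exp (- (norm x)\<^sup>2 / 2))"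
  have "std_gauss = density (distr (PiM Basis (\<lambda>_. lborel)) borel ?S) ?g"
    unfolding std_gauss_def by (subst lborel_eq) (rule refl)
  also have "\<dots> = distr (density (PiM Basis (\<lambda>_. lborel)) (\<lambda>\<omega>. ?g (?S \<omega>))) borel ?S"
    by (rule density_distr) measurable
  also have "density (PiM Basis (\<lambda>_. lborel)) (\<lambda>\<omega>. ?g (?S \<omega>))
      = density (PiM Basis (\<lambda>_. lborel)) (\<lambda>\<omega>. \<Prod>b\<in>Basis. std_normal_density (\<omega> b))"
    by (simp only: std_gauss_density_eq_prod_std_normal_density)
  also have "\<dots> = PiM Basis (\<lambda>_. std_normal_distribution)"
    by (rule PiM_density_eq_density_PiM[symmetric])
      (simp_all add: prob_space_normal_density lborel.sigma_finite_measure_axioms)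
  finally show ?thesis .
qed

lemma distributed_inner_std_gauss:
  fixes v :: "real^'d::finite"
  assumes "v \<noteq> 0"
  shows "distributed std_gauss lborel (\<lambda>x. v \<bullet> x) (normal_density 0 (norm v))"
proof -
  let ?P = "PiM (Basis :: (real^'d) set) (\<lambda>_. std_normal_distribution)"
  let ?S = "\<lambda>\<omega>. \<Sum>b\<in>(Basis :: (real^'d) set). \<omega> b *\<^sub>R b"
  have inner_S: "v \<bullet> ?S \<omega> = (\<Sum>b\<in>Basis. (v \<bullet> b) * \<omega> b)" for \<omega>
    by (simp add: inner_sum_right mult.commute)
  have "(\<Sum>b\<in>Basis. (v \<bullet> b)\<^sup>2) = (norm v)\<^sup>2"
    using norm_sum_Basis_scaleR_squared[of "\<lambda>b. v \<bullet> b"] by (simp add: euclidean_representation)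
  moreover have "\<exists>b\<in>Basis. v \<bullet> b \<noteq> 0"
    using assms euclidean_all_zero_iff[of v] by blast
  ultimately have "distributed ?P lborel (\<lambda>\<omega>. v \<bullet> ?S \<omega>) (normal_density 0 (norm v))"
    using std_normal_linear_combination_distributed[of Basis "\<lambda>b. v \<bullet> b"] by (simp add: inner_S)
  moreover have "distr std_gauss lborel (\<lambda>x. v \<bullet> x) = distr ?P lborel (\<lambda>\<omega>. v \<bullet> ?S \<omega>)"
    unfolding std_gauss_eq_distr_PiM by (subst distr_distr) (auto simp: comp_def)
  ultimately show ?thesis
    by (simp add: distributed_def std_gauss_eq_distr_PiM)
qed

lemma integrable_abs_inner_std_gauss:
  fixes v :: "real^'d::finite"
  shows "integrable std_gauss (\<lambda>x. \<bar>v \<bullet> x\<bar>)"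
proof (cases "v = 0")
  case False
  have "integrable lborel (\<lambda>x. normal_density 0 (norm v) x * \<bar>x - 0\<bar> ^ 1)"
    using False by (intro integrable_normal_moment_abs) simp
  then show ?thesis
    using distributed_integrable[OF distributed_inner_std_gauss[OF False], of abs] by simp
qed simp

lemma integral_abs_inner_std_gauss:
  fixes v :: "real^'d::finite"
  shows "(\<integral>x. \<bar>v \<bullet> x\<bar> \<partial>std_gauss) = norm v * sqrt (2 / pi)"
proof (cases "v = 0")
  case False
  have "(\<integral>x. normal_density 0 (norm v) x * \<bar>x - 0\<bar> ^ (2 * 0 + 1) \<partial>lborel)
      = 2 ^ 0 * norm v ^ (2 * 0 + 1) * fact 0 * sqrt (2 / pi)"
    using False by (intro integral_normal_moment_abs_odd) simp
  then show ?thesis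
    using distributed_integral[OF distributed_inner_std_gauss[OF False], of abs] by simp
qed simp

lemma norm_integral_scaleR_le:
  fixes X :: "'a \<Rightarrow> 'b::euclidean_space"
  assumes g: "\<And>x. \<bar>g x\<bar> \<le> 1" and "0 \<le> c"
    and integrable: "\<And>v. integrable M (\<lambda>x. \<bar>v \<bullet> X x\<bar>)"
    and bound: "\<And>v. (\<integral>x. \<bar>v \<bullet> X x\<bar> \<partial>M) \<le> c * norm v"
  shows "norm (\<integral>x. g x *\<^sub>R X x \<partial>M) \<le> c"
proof (cases "integrable M (\<lambda>x. g x *\<^sub>R X x)")
  case True
  define m where "m = (\<integral>x. g x *\<^sub>R X x \<partial>M)"
  have "(norm m)\<^sup>2 = (\<integral>x. m \<bullet> (g x *\<^sub>R X x) \<partial>M)"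
    by (subst integral_inner_right[OF True]) (simp add: m_def power2_norm_eq_inner)
  also have "\<dots> \<le> (\<integral>x. \<bar>m \<bullet> X x\<bar> \<partial>M)"
  proof (rule integral_mono)
    show "integrable M (\<lambda>x. m \<bullet> (g x *\<^sub>R X x))"
      using True by (rule integrable_inner_right)
    fix x
    have "m \<bullet> (g x *\<^sub>R X x) \<le> \<bar>g x\<bar> * \<bar>m \<bullet> X x\<bar>"
      by (metis abs_ge_self abs_mult inner_scaleR_right)
    also have "\<dots> \<le> \<bar>m \<bullet> X x\<bar>"
      using mult_right_mono[OF g abs_ge_zero] by simp
    finally show "m \<bullet> (g x *\<^sub>R X x) \<le> \<bar>m \<bullet> X x\<bar>" .
  qed (rule integrable)
  also have "\<dots> \<le> c * norm m"
    by (rule bound)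
  finally have "norm m * norm m \<le> c * norm m"
    by (simp add: power2_eq_square)
  then show ?thesis
    unfolding m_def[symmetric] using \<open>0 \<le> c\<close>
    by (cases "m = 0") (auto intro: mult_right_le_imp_le)
qed (simp add: not_integrable_integral_eq \<open>0 \<le> c\<close>)

lemma em_weight_nonneg_le_one:
  assumes "0 \<le> p" "p \<le> 1"
  shows "0 \<le> em_weight p \<theta> x" "em_weight p \<theta> x \<le> 1"
proof -
  let ?a = "p * exp (- (norm (\<theta> - x))\<^sup>2 / 2)" and ?b = "(1 - p) * exp (- (norm (\<theta> + x))\<^sup>2 / 2)"
  have "0 \<le> ?a" "0 \<le> ?b"
    using assms by simp_all
  moreover have "0 < ?a + ?b"
    using assms by (cases "p = 0") (auto intro: add_pos_nonneg)
  ultimately show "0 \<le> em_weight p \<theta> x" "em_weight p \<theta> x \<le> 1"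
    unfolding em_weight_def by simp_all
qed

theorem lemma5:
  fixes \<theta> :: "real ^ 'd::finite" and p :: real
  assumes "0 < p" and "p < 1"
  shows "norm (em_M p \<theta>) \<le> sqrt (2 / pi)"
proof -
  have "\<bar>2 * em_weight p \<theta> x - 1\<bar> \<le> 1" for x
    using em_weight_nonneg_le_one[of p \<theta> x] assms by simp
  then show ?thesis
    unfolding em_M_def
    by (rule norm_integral_scaleR_le)
      (simp_all add: integrable_abs_inner_std_gauss integral_abs_inner_std_gauss)
qed

end
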